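(* Let $\mathcal{G}=(\mathcal{V},\mathcal{E})$ be a connected directed graph, let $\Gamma$ be a set of independent closed paths spanning the cycle space of $\mathcal{G}$, let $\delta'_{ij}\in\mathbb{Z}$ be given for each $(i,j)\in\mathcal{E}$, and let $c=(c_{ij})$ be a real cost vector on the flow variables. Let $\mathcal{H}=\{\mathcal{G}^k=(\mathcal{V}^k,\mathcal{E}^k): k=1,\dots,\mathcal{K}\}$ be any decomposition of $\mathcal{G}$ that covers it, i.e. $\mathcal{V}^k=\mathcal{V}$ for all $k$ and $\bigcup_k\mathcal{E}^k=\mathcal{E}$, where each $\mathcal{G}^k$ comes with a cycle set $\Gamma^k\subset\Gamma$, and let the costs be split as $c^k_{ij}$ with $\sum_{k\in\mathcal{G}_e(i,j)}c^k_{ij}=c_{ij}$ for every edge $(i,j)$. Then $\mathbb{LR}\le\mathbb{PU}$. Furthermore, if $\bigcap_k\mathcal{A}(\Gamma^k)=\mathcal{A}(\Gamma)$, then $\mathbb{LR}=\mathbb{PU}$.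
   Context: Flow variables: for each edge $(i,j)\in\mathcal{E}$ there are two nonnegative flow variables $\delta_{ij},\delta_{ji}$; $\delta$ denotes the vector of all flow variables, and the objective is the linear function $\sum c_{ij}\delta_{ij}$ summed over the flow variables. For a set $\Gamma'$ of closed paths (each a sequence of arcs $C$), $\mathcal{A}(\Gamma')$ denotes the set of flow vectors satisfying, for every $C\in\Gamma'$, $\sum_{(i,j)\in C}(\delta_{ij}-\delta_{ji})=\sum_{(i,j)\in C}\delta'_{ij}$. Definitions: $\mathbb{PU}=\min\{\sum c_{ij}\delta_{ij}: \delta\in\mathcal{A}(\Gamma),\ \delta\in\{0,1\}\}$ (transformed phase unwrapping); $\mathbb{LP}$ is the same with $\delta\in[0,1]$. $\mathcal{G}_e(i,j)$ is the set of indices $k$ of subgraphs containing edge $(i,j)$. For each $k$ introduce local flow variables $\delta^k$ on the edges of $\mathcal{E}^k$, required (in the consistency-constrained reformulation) to equal the global $\delta$; $\mathbb{LR}$ is the Lagrangian relaxation of these consistency constraints with a multiplier $\lambda^k_{ij}$ for each constraint $\delta^k_{ij}=\delta_{ij}$: $\mathbb{LR}=\max_{\lambda}\ \min\Big\{\sum_k\sum_{ij\in\mathcal{E}^k}\big(c^k_{ij}\delta^k_{ij}+\lambda^k_{ij}(\delta^k_{ij}-\delta_{ij})\big):\ \delta^k\in\mathcal{A}(\Gamma^k),\ \delta^k\in[0,1],\ \delta\in[0,1]\Big\}$, i.e. $\max_\lambda\sum_k f^k(\lambda^k)$ where $f^k$ is the $k$-th subproblem. *)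

theory Defs
  imports Complex_Main "HOL-Library.Extended_Real"
begin

text \<open>For each arc e = (i,j) there are two flow variables:
  flow e True stands for delta_ij and flow e False stands for delta_ji.
  A flow vector is therefore a function of type ('v*'v) => bool => real;
  only its values on arcs of E matter.\<close>

type_synonym 'v flow = "'v \<times> 'v \<Rightarrow> bool \<Rightarrow> real"

text \<open>An oriented arc (e, True) traverses e = (i,j) from i to j,
  (e, False) traverses it backwards from j to i. A closed path is a
  nonempty list of oriented arcs forming a closed walk.\<close>

type_synonym 'v path = "(('v \<times> 'v) \<times> bool) list"

definition tail_of :: "('v \<times> 'v) \<times> bool \<Rightarrow> 'v" where
  "tail_of a = (if snd a then fst (fst a) else snd (fst a))"

definition head_of :: "('v \<times> 'v) \<times> bool \<Rightarrow> 'v" where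
  "head_of a = (if snd a then snd (fst a) else fst (fst a))"

definition closed_path :: "('v \<times> 'v) set \<Rightarrow> 'v path \<Rightarrow> bool" where
  "closed_path E C \<longleftrightarrow> C \<noteq> [] \<and> (\<forall>a\<in>set C. fst a \<in> E)
     \<and> (\<forall>n. Suc n < length C \<longrightarrow> head_of (C ! n) = tail_of (C ! Suc n))
     \<and> head_of (last C) = tail_of (hd C)"

definition path_vec :: "'v path \<Rightarrow> ('v \<times> 'v) \<Rightarrow> real" where
  "path_vec C e = sum_list (map (\<lambda>a. if fst a = e then (if snd a then 1 else -1) else 0) C)"

definition cycle_space :: "'v set \<Rightarrow> ('v \<times> 'v) set \<Rightarrow> (('v \<times> 'v) \<Rightarrow> real) set" where
  "cycle_space V E = {x. (\<forall>e. e \<notin> E \<longrightarrow> x e = 0) \<and>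
     (\<forall>v\<in>V. (\<Sum>e\<in>{e\<in>E. fst e = v}. x e) = (\<Sum>e\<in>{e\<in>E. snd e = v}. x e))}"

definition spans_cycle_space :: "'v set \<Rightarrow> ('v \<times> 'v) set \<Rightarrow> 'v path set \<Rightarrow> bool" where
  "spans_cycle_space V E \<Gamma> \<longleftrightarrow>
     (\<forall>x\<in>cycle_space V E. \<exists>a. x = (\<lambda>e. \<Sum>C\<in>\<Gamma>. a C * path_vec C e))"

definition independent_paths :: "'v path set \<Rightarrow> bool" where
  "independent_paths \<Gamma> \<longleftrightarrow>
     (\<forall>a. (\<forall>e. (\<Sum>C\<in>\<Gamma>. a C * path_vec C e) = 0) \<longrightarrow> (\<forall>C\<in>\<Gamma>. a C = 0))"

definition connected_graph :: "'v set \<Rightarrow> ('v \<times> 'v) set \<Rightarrow> bool" where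
  "connected_graph V E \<longleftrightarrow> (\<forall>u\<in>V. \<forall>v\<in>V. (u, v) \<in> (E \<union> E\<inverse>)\<^sup>*)"

text \<open>Traversing an arc
  backwards (j to i) the term is delta_ji - delta_ij and delta'_ji = - delta'_ij.\<close>

definition path_flow_sum :: "'v flow \<Rightarrow> 'v path \<Rightarrow> real" where
  "path_flow_sum d C = sum_list (map (\<lambda>a. if snd a then d (fst a) True - d (fst a) False
                                               else d (fst a) False - d (fst a) True) C)"

definition path_offset_sum :: "('v \<times> 'v \<Rightarrow> int) \<Rightarrow> 'v path \<Rightarrow> real" where
  "path_offset_sum dp C = sum_list (map (\<lambda>a. if snd a then real_of_int (dp (fst a))
                                                   else - real_of_int (dp (fst a))) C)"

definition Aset :: "('v \<times> 'v \<Rightarrow> int) \<Rightarrow> 'v path set \<Rightarrow> 'v flow set" where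
  "Aset dp \<Gamma>' = {d. \<forall>C\<in>\<Gamma>'. path_flow_sum d C = path_offset_sum dp C}"

definition cost :: "('v \<times> 'v) set \<Rightarrow> 'v flow \<Rightarrow> 'v flow \<Rightarrow> real" where
  "cost E c d = (\<Sum>e\<in>E. c e True * d e True + c e False * d e False)"

text \<open>PU: minimum over binary flow vectors in A(Gamma) (infimum in the
  extended reals; +infinity if infeasible).\<close>

definition PU :: "('v \<times> 'v) set \<Rightarrow> 'v path set \<Rightarrow> ('v \<times> 'v \<Rightarrow> int) \<Rightarrow> 'v flow \<Rightarrow> ereal" where
  "PU E \<Gamma> dp c = (INF d\<in>{d. d \<in> Aset dp \<Gamma> \<and> (\<forall>e\<in>E. \<forall>b. d e b \<in> {0, 1})}. ereal (cost E c d))"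

definition LP :: "('v \<times> 'v) set \<Rightarrow> 'v path set \<Rightarrow> ('v \<times> 'v \<Rightarrow> int) \<Rightarrow> 'v flow \<Rightarrow> ereal" where
  "LP E \<Gamma> dp c = (INF d\<in>{d. d \<in> Aset dp \<Gamma> \<and> (\<forall>e\<in>E. \<forall>b. d e b \<in> {0..1})}. ereal (cost E c d))"

text \<open>Lagrangian relaxation. Subgraphs are indexed by k in {1..K}, with arc
  sets Ek k, cycle sets Gk k and cost splits ck k. Local flows are ds k,
  the global flow is d, multipliers are lam k e b.\<close>

definition lagrangian ::
  "nat \<Rightarrow> (nat \<Rightarrow> ('v \<times> 'v) set) \<Rightarrow> (nat \<Rightarrow> 'v flow) \<Rightarrow> (nat \<Rightarrow> 'v flow)
     \<Rightarrow> (nat \<Rightarrow> 'v flow) \<Rightarrow> 'v flow \<Rightarrow> real" where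
  "lagrangian K Ek ck lam ds d =
     (\<Sum>k\<in>{1..K}. \<Sum>e\<in>Ek k. \<Sum>b\<in>(UNIV::bool set).
        ck k e b * ds k e b + lam k e b * (ds k e b - d e b))"

definition LR ::
  "('v \<times> 'v) set \<Rightarrow> ('v \<times> 'v \<Rightarrow> int) \<Rightarrow> nat \<Rightarrow> (nat \<Rightarrow> ('v \<times> 'v) set)
     \<Rightarrow> (nat \<Rightarrow> 'v path set) \<Rightarrow> (nat \<Rightarrow> 'v flow) \<Rightarrow> ereal" where
  "LR E dp K Ek Gk ck =
     (SUP lam\<in>(UNIV :: (nat \<Rightarrow> 'v flow) set).
        (INF p\<in>{(ds, d). (\<forall>k\<in>{1..K}. ds k \<in> Aset dp (Gk k) \<and> (\<forall>e\<in>Ek k. \<forall>b. ds k e b \<in> {0..1}))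
                       \<and> (\<forall>e\<in>E. \<forall>b. d e b \<in> {0..1})}.
            ereal (lagrangian K Ek ck lam (fst p) (snd p))))"

end

theory Submission
  imports Defs "HOL-Library.Function_Algebras" "HOL-Analysis.Henstock_Kurzweil_Integration"
begin

text \<open>
  Copying a feasible global flow into every subproblem makes the multiplier terms vanish and,
  by the cost split, keeps its cost, so LR \<le> LP \<le> PU.
  First PU = LP: for a fractional flow d in A(\<Gamma>) the arc function d_ij - d_ji - \<delta>'_ij
  sums to zero along every path of \<Gamma>, hence along every closed walk (\<Gamma> spans the cycle
  space), hence it is a potential difference \<phi>_j - \<phi>_i (the graph is connected).
  Rounding the shifted potential \<lfloor>\<phi> + t\<rfloor> gives binary flows in A(\<Gamma>), and
  averaging their costs over t \<in> [0, 1] yields the convex envelope of the arc costs evaluated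
  at d, which is at most the cost of d. Second, if the sets A(\<Gamma>^k) intersect to A(\<Gamma>),
  the consistency-constrained problem is exactly LP, and linear programming duality, proved
  from Farkas' lemma, shows that relaxing the consistency constraints with suitable
  multipliers loses nothing: LP \<le> LR.
\<close>

section \<open>Farkas' lemma and Lagrangian duality\<close>

lemma nonneg_combination_insert:
  assumes "finite I" and "i0 \<notin> I" and "0 \<le> \<gamma>" and "\<forall>i\<in>I. 0 \<le> y i"
    and "\<forall>x. b x = \<gamma> * A i0 x + (\<Sum>i\<in>I. y i * A i x)"
  shows "\<exists>y. (\<forall>i\<in>insert i0 I. 0 \<le> y i) \<and> (\<forall>x. b x = (\<Sum>i\<in>insert i0 I. y i * A i x))"
proof (intro exI conjI)
  show "\<forall>i\<in>insert i0 I. 0 \<le> (y(i0 := \<gamma>)) i"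
    using assms(3,4) by simp
  show "\<forall>x. b x = (\<Sum>i\<in>insert i0 I. (y(i0 := \<gamma>)) i * A i x)"
  proof
    fix x
    have "(\<Sum>i\<in>I. (y(i0 := \<gamma>)) i * A i x) = (\<Sum>i\<in>I. y i * A i x)"
      using assms(2) by (intro sum.cong) auto
    then show "b x = (\<Sum>i\<in>insert i0 I. (y(i0 := \<gamma>)) i * A i x)"
      using assms(1,2,5) by simp
  qed
qed

lemma nonneg_combination_from_kernel:
  fixes a b :: "'a::real_vector \<Rightarrow> real" and A :: "'i \<Rightarrow> 'a \<Rightarrow> real"
  assumes "linear a" and "linear b" and "\<And>i. i \<in> I \<Longrightarrow> linear (A i)"
    and "a z < 0" and "b z < 0" and "\<forall>i\<in>I. 0 \<le> A i z" and "\<forall>i\<in>I. 0 \<le> \<mu> i"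
    and on_kernel: "\<And>x. a x = 0 \<Longrightarrow> b x = (\<Sum>i\<in>I. \<mu> i * A i x)"
  shows "\<exists>\<gamma>\<ge>0. \<forall>x. b x = \<gamma> * a x + (\<Sum>i\<in>I. \<mu> i * A i x)"
proof (intro exI conjI allI)
  define \<gamma> where "\<gamma> = (b z - (\<Sum>i\<in>I. \<mu> i * A i z)) / a z"
  have "0 \<le> (\<Sum>i\<in>I. \<mu> i * A i z)"
    using assms(6,7) by (simp add: sum_nonneg)
  then show "0 \<le> \<gamma>"
    using assms(4,5) unfolding \<gamma>_def by (simp add: divide_nonpos_neg)
  fix x
  define s where "s = a x / a z"
  have "a (x - s *\<^sub>R z) = 0"
    using \<open>a z < 0\<close> by (simp add: s_def linear_diff[OF assms(1)] linear_scale[OF assms(1)])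
  then have "b x - s * b z = (\<Sum>i\<in>I. \<mu> i * (A i x - s * A i z))"
    using on_kernel[of "x - s *\<^sub>R z"] assms(2,3) by (simp add: linear_diff linear_scale)
  then have "b x = s * (b z - (\<Sum>i\<in>I. \<mu> i * A i z)) + (\<Sum>i\<in>I. \<mu> i * A i x)"
    by (simp add: right_diff_distrib sum_subtractf sum_distrib_left algebra_simps)
  then show "b x = \<gamma> * a x + (\<Sum>i\<in>I. \<mu> i * A i x)"
    by (simp add: s_def \<gamma>_def)
qed

lemma linear_projection:
  fixes a :: "'a::real_vector \<Rightarrow> real"
  assumes "linear a" and "a z \<noteq> 0"
  shows "linear (\<lambda>x. x - (a x / a z) *\<^sub>R z)" and "a (x - (a x / a z) *\<^sub>R z) = 0"
proof -
  show "linear (\<lambda>x. x - (a x / a z) *\<^sub>R z)"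
    by (rule linearI) (simp_all add: linear_add[OF assms(1)] linear_scale[OF assms(1)]
        add_divide_distrib scaleR_add_left algebra_simps)
  show "a (x - (a x / a z) *\<^sub>R z) = 0"
    using assms(2) by (simp add: linear_diff[OF assms(1)] linear_scale[OF assms(1)])
qed

lemma farkas_lemma:
  fixes A :: "'i \<Rightarrow> 'a::real_vector \<Rightarrow> real" and b :: "'a \<Rightarrow> real"
  assumes "finite I" and "\<And>i. i \<in> I \<Longrightarrow> linear (A i)" and "linear b"
    and "\<And>x. \<forall>i\<in>I. 0 \<le> A i x \<Longrightarrow> 0 \<le> b x"
  shows "\<exists>y. (\<forall>i\<in>I. 0 \<le> y i) \<and> (\<forall>x. b x = (\<Sum>i\<in>I. y i * A i x))"
  using assms
proof (induction I arbitrary: A b rule: finite_induct)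
  case empty
  have "b x = 0" for x
    using empty.prems(3)[of x] empty.prems(3)[of "- x"] linear_neg[OF empty.prems(2)] by simp
  then show ?case by simp
next
  case (insert i0 I)
  show ?case
  proof (cases "\<forall>x. (\<forall>i\<in>I. 0 \<le> A i x) \<longrightarrow> 0 \<le> b x")
    case True
    then obtain y where "\<forall>i\<in>I. 0 \<le> y i" "\<forall>x. b x = (\<Sum>i\<in>I. y i * A i x)"
      using insert.IH insert.prems by blast
    then show ?thesis
      using insert.hyps nonneg_combination_insert[where \<gamma> = 0 and y = y and A = A] by simp
  next
    case False
    then obtain z where z: "\<forall>i\<in>I. 0 \<le> A i z" "b z < 0"
      by force
    then have "A i0 z < 0"
      using insert.prems(3)[of z] by force
    \<comment> \<open>Project along z onto the kernel of A i0 and apply the induction hypothesis there.\<close>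
    define P where "P x = x - (A i0 x / A i0 z) *\<^sub>R z" for x
    have lin_i0: "linear (A i0)"
      using insert.prems(1) by simp
    have P: "linear P" "\<And>x. A i0 (P x) = 0"
      using linear_projection[OF lin_i0, of z] \<open>A i0 z < 0\<close> unfolding P_def by auto
    have "\<exists>\<mu>. (\<forall>i\<in>I. 0 \<le> \<mu> i) \<and> (\<forall>x. (b \<circ> P) x = (\<Sum>i\<in>I. \<mu> i * (A i \<circ> P) x))"
    proof (rule insert.IH)
      show "linear (A i \<circ> P)" if "i \<in> I" for i
        using linear_compose[OF P(1) insert.prems(1)] that by simp
      show "linear (b \<circ> P)"
        using linear_compose[OF P(1) insert.prems(2)] .
      show "0 \<le> (b \<circ> P) x" if "\<forall>i\<in>I. 0 \<le> (A i \<circ> P) x" for x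
        using that insert.prems(3)[of "P x"] P(2) by simp
    qed
    then obtain \<mu> where \<mu>: "\<forall>i\<in>I. 0 \<le> \<mu> i" "\<forall>x. b (P x) = (\<Sum>i\<in>I. \<mu> i * A i (P x))"
      by auto
    have "\<exists>\<gamma>\<ge>0. \<forall>x. b x = \<gamma> * A i0 x + (\<Sum>i\<in>I. \<mu> i * A i x)"
    proof (rule nonneg_combination_from_kernel[where z = z])
      show "b y = (\<Sum>i\<in>I. \<mu> i * A i y)" if "A i0 y = 0" for y
        using \<mu>(2)[rule_format, of y] that by (simp add: P_def)
    qed (use lin_i0 insert.prems(1,2) \<open>A i0 z < 0\<close> z \<mu>(1) in auto)
    then obtain \<gamma> where "0 \<le> \<gamma>" "\<forall>x. b x = \<gamma> * A i0 x + (\<Sum>i\<in>I. \<mu> i * A i x)"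
      by blast
    then show ?thesis
      using insert.hyps \<mu>(1) by (intro nonneg_combination_insert)
  qed
qed

text \<open>The constraints c i \<le> A i x and G l x = 0, the latter as two opposite inequalities,
  homogenised with a new variable t \<ge> 0: a point (t, x) with t > 0 is feasible iff x / t is.\<close>

definition homogenisation ::
  "('i \<Rightarrow> 'a \<Rightarrow> real) \<Rightarrow> ('i \<Rightarrow> real) \<Rightarrow> ('l \<Rightarrow> 'a \<Rightarrow> real) \<Rightarrow> ('i + 'l \<times> bool) option
     \<Rightarrow> real \<times> 'a \<Rightarrow> real" where
  "homogenisation A c G w p = (case w of
      None \<Rightarrow> fst p
    | Some (Inl i) \<Rightarrow> A i (snd p) - c i * fst p
    | Some (Inr (l, s)) \<Rightarrow> (if s then G l (snd p) else - G l (snd p)))"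

definition homogenisation_index :: "'i set \<Rightarrow> 'l set \<Rightarrow> ('i + 'l \<times> bool) option set" where
  "homogenisation_index I L = insert None (Some ` (Inl ` I \<union> Inr ` (L \<times> UNIV)))"

lemma finite_homogenisation_index: "finite I \<Longrightarrow> finite L \<Longrightarrow> finite (homogenisation_index I L)"
  by (simp add: homogenisation_index_def)

lemma linear_homogenisation:
  fixes A :: "'i \<Rightarrow> 'a::real_vector \<Rightarrow> real"
  assumes "\<And>i. i \<in> I \<Longrightarrow> linear (A i)" and "\<And>l. l \<in> L \<Longrightarrow> linear (G l)"
    and "w \<in> homogenisation_index I L"
  shows "linear (homogenisation A c G w)"
proof -
  consider "w = None" | i where "i \<in> I" "w = Some (Inl i)"
    | l s where "l \<in> L" "w = Some (Inr (l, s))"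
    using assms(3) by (auto simp: homogenisation_index_def)
  then show ?thesis
  proof cases
    case 1
    then show ?thesis
      by (intro linearI) (simp_all add: homogenisation_def)
  next
    case (2 i)
    then show ?thesis
      using assms(1)[OF 2(1)]
      by (intro linearI) (simp_all add: homogenisation_def linear_add linear_scale algebra_simps)
  next
    case (3 l s)
    then show ?thesis
      using assms(2)[OF 3(1)]
      by (intro linearI) (simp_all add: homogenisation_def linear_add linear_scale algebra_simps)
  qed
qed

lemma homogenisation_nonneg_iff:
  "(\<forall>w\<in>homogenisation_index I L. 0 \<le> homogenisation A c G w (t, x))
     \<longleftrightarrow> 0 \<le> t \<and> (\<forall>i\<in>I. c i * t \<le> A i x) \<and> (\<forall>l\<in>L. G l x = 0)"
  by (auto simp: homogenisation_index_def homogenisation_def ball_Un all_bool_eq antisym_conv)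

lemma sum_homogenisation:
  assumes "finite I" and "finite L"
  shows "(\<Sum>w\<in>homogenisation_index I L. y w * homogenisation A c G w (1, x))
    = y None + (\<Sum>i\<in>I. y (Some (Inl i)) * (A i x - c i))
      + (\<Sum>l\<in>L. (y (Some (Inr (l, True))) - y (Some (Inr (l, False)))) * G l x)"
proof -
  let ?h = "\<lambda>q. y (Some q) * homogenisation A c G (Some q) (1, x)"
  have "(\<Sum>w\<in>homogenisation_index I L. y w * homogenisation A c G w (1, x))
      = y None + (\<Sum>q\<in>Inl ` I \<union> Inr ` (L \<times> UNIV). ?h q)"
    using assms by (simp add: homogenisation_index_def homogenisation_def sum.reindex)
  also have "(\<Sum>q\<in>Inl ` I \<union> Inr ` (L \<times> UNIV). ?h q)
      = (\<Sum>q\<in>Inl ` I. ?h q) + (\<Sum>l\<in>L. \<Sum>s\<in>UNIV. ?h (Inr (l, s)))"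
    using assms by (subst sum.union_disjoint)
      (auto simp: sum.reindex sum.cartesian_product case_prod_beta')
  finally show ?thesis
    by (simp add: sum.reindex homogenisation_def UNIV_bool algebra_simps)
qed

lemma homogenised_lower_bound:
  fixes A :: "'i \<Rightarrow> 'a::real_vector \<Rightarrow> real" and G :: "'l \<Rightarrow> 'a \<Rightarrow> real"
  assumes lin_A: "\<And>i. i \<in> I \<Longrightarrow> linear (A i)" and lin_G: "\<And>l. l \<in> L \<Longrightarrow> linear (G l)"
    and lin_f: "linear f"
    and recession: "\<And>x. \<forall>i\<in>I. 0 \<le> A i x \<Longrightarrow> \<forall>l\<in>L. G l x = 0 \<Longrightarrow> 0 \<le> f x"
    and lower: "\<And>x. \<forall>i\<in>I. c i \<le> A i x \<Longrightarrow> \<forall>l\<in>L. G l x = 0 \<Longrightarrow> v \<le> f x"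
    and "0 \<le> t" and A_ge: "\<forall>i\<in>I. c i * t \<le> A i x" and G_eq: "\<forall>l\<in>L. G l x = 0"
  shows "v * t \<le> f x"
proof (cases "t = 0")
  case True
  then show ?thesis
    using recession A_ge G_eq by simp
next
  case False
  with \<open>0 \<le> t\<close> have "0 < t"
    by simp
  have "c i \<le> A i ((1 / t) *\<^sub>R x)" if "i \<in> I" for i
    using A_ge that \<open>0 < t\<close> linear_scale[OF lin_A[OF that]] by (simp add: field_simps)
  moreover have "G l ((1 / t) *\<^sub>R x) = 0" if "l \<in> L" for l
    using G_eq that linear_scale[OF lin_G[OF that]] by simp
  ultimately have "v \<le> f ((1 / t) *\<^sub>R x)"
    by (intro lower) auto
  then show ?thesis
    using \<open>0 < t\<close> linear_scale[OF lin_f] by (simp add: field_simps)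
qed

lemma lagrangian_multipliers:
  fixes A :: "'i \<Rightarrow> 'a::real_vector \<Rightarrow> real" and G :: "'l \<Rightarrow> 'a \<Rightarrow> real"
  assumes "finite I" and "finite L"
    and lin_A: "\<And>i. i \<in> I \<Longrightarrow> linear (A i)" and lin_G: "\<And>l. l \<in> L \<Longrightarrow> linear (G l)"
    and lin_f: "linear f"
    and recession: "\<And>x. \<forall>i\<in>I. 0 \<le> A i x \<Longrightarrow> \<forall>l\<in>L. G l x = 0 \<Longrightarrow> 0 \<le> f x"
    and lower: "\<And>x. \<forall>i\<in>I. c i \<le> A i x \<Longrightarrow> \<forall>l\<in>L. G l x = 0 \<Longrightarrow> v \<le> f x"
  shows "\<exists>\<mu>. \<forall>x. (\<forall>i\<in>I. c i \<le> A i x) \<longrightarrow> v \<le> f x + (\<Sum>l\<in>L. \<mu> l * G l x)"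
proof -
  let ?W = "homogenisation_index I L" and ?H = "homogenisation A c G"
  have "\<exists>y. (\<forall>w\<in>?W. 0 \<le> y w) \<and> (\<forall>p. f (snd p) - v * fst p = (\<Sum>w\<in>?W. y w * ?H w p))"
  proof (rule farkas_lemma)
    show "finite ?W"
      using assms(1,2) by (rule finite_homogenisation_index)
    show "linear (?H w)" if "w \<in> ?W" for w
      using lin_A lin_G that by (rule linear_homogenisation)
    show "linear (\<lambda>p. f (snd p) - v * fst p)"
      using lin_f by (intro linearI) (simp_all add: linear_add linear_scale algebra_simps)
    show "0 \<le> f (snd p) - v * fst p" if "\<forall>w\<in>?W. 0 \<le> ?H w p" for p
    proof -
      obtain t x where p: "p = (t, x)"
        by force
      have "0 \<le> t \<and> (\<forall>i\<in>I. c i * t \<le> A i x) \<and> (\<forall>l\<in>L. G l x = 0)"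
        using that unfolding p homogenisation_nonneg_iff .
      then have "v * t \<le> f x"
        using homogenised_lower_bound[of I A L G f c v t x, OF lin_A lin_G lin_f recession lower]
        by blast
      then show ?thesis
        by (simp add: p)
    qed
  qed
  then obtain y where y: "\<forall>w\<in>?W. 0 \<le> y w" "\<And>p. f (snd p) - v * fst p = (\<Sum>w\<in>?W. y w * ?H w p)"
    by blast
  show ?thesis
  proof (intro exI allI impI)
    fix x assume x: "\<forall>i\<in>I. c i \<le> A i x"
    have "0 \<le> y None" and "0 \<le> (\<Sum>i\<in>I. y (Some (Inl i)) * (A i x - c i))"
      using y(1) x by (auto simp: homogenisation_index_def intro!: sum_nonneg)
    moreover have "(\<Sum>l\<in>L. (y (Some (Inr (l, False))) - y (Some (Inr (l, True)))) * G l x)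
        = - (\<Sum>l\<in>L. (y (Some (Inr (l, True))) - y (Some (Inr (l, False)))) * G l x)"
      by (simp add: algebra_simps flip: sum_negf)
    moreover have "f x - v = y None + (\<Sum>i\<in>I. y (Some (Inl i)) * (A i x - c i))
        + (\<Sum>l\<in>L. (y (Some (Inr (l, True))) - y (Some (Inr (l, False)))) * G l x)"
      using y(2)[of "(1, x)"] sum_homogenisation[OF assms(1,2), of y A c G x] by simp
    ultimately show "v \<le> f x + (\<Sum>l\<in>L. (y (Some (Inr (l, False))) - y (Some (Inr (l, True)))) * G l x)"
      by linarith
  qed
qed

lemma lp_lagrangian_duality:
  fixes A :: "'i \<Rightarrow> 'a::real_vector \<Rightarrow> real" and G :: "'l \<Rightarrow> 'a \<Rightarrow> real"
  assumes "finite I" and "finite L"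
    and "\<And>i. i \<in> I \<Longrightarrow> linear (A i)" and "\<And>l. l \<in> L \<Longrightarrow> linear (G l)" and "linear f"
    and "\<And>x. \<forall>i\<in>I. 0 \<le> A i x \<Longrightarrow> \<forall>l\<in>L. G l x = 0 \<Longrightarrow> 0 \<le> f x"
  shows "(INF x\<in>{x. (\<forall>i\<in>I. c i \<le> A i x) \<and> (\<forall>l\<in>L. G l x = 0)}. ereal (f x))
    \<le> (SUP \<mu>. INF x\<in>{x. \<forall>i\<in>I. c i \<le> A i x}. ereal (f x + (\<Sum>l\<in>L. \<mu> l * G l x)))"
    (is "?primal \<le> ?dual")
proof (rule dense_le)
  fix w assume w: "w < ?primal"
  show "w \<le> ?dual"
  proof (cases w)
    case (real v)
    have lower: "v \<le> f x" if "\<forall>i\<in>I. c i \<le> A i x" and "\<forall>l\<in>L. G l x = 0" for x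
    proof -
      have "?primal \<le> ereal (f x)"
        using that by (intro INF_lower) simp
      with w have "w < ereal (f x)"
        by (rule less_le_trans)
      then show ?thesis
        using real by simp
    qed
    have "\<exists>\<mu>. \<forall>x. (\<forall>i\<in>I. c i \<le> A i x) \<longrightarrow> v \<le> f x + (\<Sum>l\<in>L. \<mu> l * G l x)"
      by (rule lagrangian_multipliers[of I L A G f c v]) (fact assms lower)+
    then obtain \<mu> where \<mu>: "\<forall>x. (\<forall>i\<in>I. c i \<le> A i x) \<longrightarrow> v \<le> f x + (\<Sum>l\<in>L. \<mu> l * G l x)" ..
    have "w \<le> (INF x\<in>{x. \<forall>i\<in>I. c i \<le> A i x}. ereal (f x + (\<Sum>l\<in>L. \<mu> l * G l x)))"
      using \<mu> real by (intro INF_greatest) simp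
    then show ?thesis
      by (intro SUP_upper2[of \<mu>]) simp_all
  next
    case PInf
    then show ?thesis using w by simp
  next
    case MInf
    then show ?thesis by simp
  qed
qed

section \<open>Walks, the cycle space and potentials\<close>

definition path_weight :: "('v \<times> 'v \<Rightarrow> real) \<Rightarrow> 'v path \<Rightarrow> real" where
  "path_weight w W = (\<Sum>a\<leftarrow>W. if snd a then w (fst a) else - w (fst a))"

definition reverse_path :: "'v path \<Rightarrow> 'v path" where
  "reverse_path W = rev (map (\<lambda>(e, s). (e, \<not> s)) W)"

lemma path_weight_append: "path_weight w (W1 @ W2) = path_weight w W1 + path_weight w W2"
  by (simp add: path_weight_def)

lemma path_weight_reverse_path: "path_weight w (reverse_path W) = - path_weight w W"
  by (induction W) (auto simp: path_weight_def reverse_path_def)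

lemma path_weight_cong:
  "(\<And>a. a \<in> set W \<Longrightarrow> w1 (fst a) = w2 (fst a)) \<Longrightarrow> path_weight w1 W = path_weight w2 W"
  unfolding path_weight_def by (intro arg_cong[where f = sum_list] map_cong) auto

lemma path_flow_sum_minus_offset:
  "path_flow_sum d C - path_offset_sum dp C
     = path_weight (\<lambda>e. d e True - d e False - real_of_int (dp e)) C"
  by (induction C) (auto simp: path_flow_sum_def path_offset_sum_def path_weight_def)

lemma path_weight_eq_sum_path_vec:
  assumes "finite E" and "\<forall>a\<in>set W. fst a \<in> E"
  shows "path_weight w W = (\<Sum>e\<in>E. path_vec W e * w e)"
  using assms(2)
proof (induction W)
  case Nil
  then show ?case by (simp add: path_weight_def path_vec_def)
next
  case (Cons a W)
  have pv: "path_vec (a # W) e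
      = (if e = fst a then (if snd a then 1 else -1) else 0) + path_vec W e" for e
    by (auto simp: path_vec_def)
  have "(\<Sum>e\<in>E. path_vec (a # W) e * w e)
      = (\<Sum>e\<in>E. if e = fst a then (if snd a then w e else - w e) else 0)
        + (\<Sum>e\<in>E. path_vec W e * w e)"
    unfolding pv sum.distrib[symmetric] by (intro sum.cong) (auto simp: distrib_right)
  also have "\<dots> = (if snd a then w (fst a) else - w (fst a)) + path_weight w W"
    using Cons assms(1) by (simp add: sum.delta')
  finally show ?case by (simp add: path_weight_def)
qed

lemma path_vec_eq_0: "\<forall>a\<in>set W. fst a \<in> E \<Longrightarrow> e \<notin> E \<Longrightarrow> path_vec W e = 0"
  by (induction W) (auto simp: path_vec_def)

inductive walk :: "('v \<times> 'v) set \<Rightarrow> 'v path \<Rightarrow> 'v \<Rightarrow> 'v \<Rightarrow> bool" for E where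
  walk_Nil: "walk E [] s s"
| walk_Cons: "fst a \<in> E \<Longrightarrow> tail_of a = s \<Longrightarrow> walk E W (head_of a) t \<Longrightarrow> walk E (a # W) s t"

lemma walk_arcs: "walk E W s t \<Longrightarrow> \<forall>a\<in>set W. fst a \<in> E"
  by (induction rule: walk.induct) auto

lemma walk_append: "walk E W1 s m \<Longrightarrow> walk E W2 m t \<Longrightarrow> walk E (W1 @ W2) s t"
  by (induction rule: walk.induct) (auto intro: walk.intros)

lemma walk_reverse_path: "walk E W s t \<Longrightarrow> walk E (reverse_path W) t s"
proof (induction rule: walk.induct)
  case (walk_Nil s)
  then show ?case by (simp add: reverse_path_def walk.walk_Nil)
next
  case (walk_Cons a s W t)
  have "walk E [(fst a, \<not> snd a)] (head_of a) s"
    using walk_Cons.hyps by (auto intro!: walk.intros simp: head_of_def tail_of_def)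
  then show ?case
    using walk_append[OF walk_Cons.IH] by (simp add: reverse_path_def case_prod_beta')
qed

lemma walk_potential_difference:
  "walk E W s t \<Longrightarrow> path_weight (\<lambda>e. g (snd e) - g (fst e)) W = g t - g s"
  by (induction rule: walk.induct)
    (auto simp: path_weight_def head_of_def tail_of_def split: if_splits)

lemma rtrancl_imp_walk: "(u, v) \<in> (E \<union> E\<inverse>)\<^sup>* \<Longrightarrow> \<exists>W. walk E W u v"
proof (induction rule: converse_rtrancl_induct)
  case base
  then show ?case by (auto intro: walk.intros)
next
  case (step y z)
  then obtain W where "walk E W z v" by blast
  with step(1) have "walk E (((y, z), True) # W) y v \<or> walk E (((z, y), False) # W) y v"
    by (auto intro!: walk.intros simp: head_of_def tail_of_def)
  then show ?case by blast
qed

lemma closed_path_walk: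
  assumes "closed_path E C"
  shows "walk E C (tail_of (hd C)) (tail_of (hd C))"
proof -
  have "walk E C (tail_of (hd C)) (head_of (last C))"
    if "C \<noteq> []" "\<forall>a\<in>set C. fst a \<in> E"
      "\<forall>n. Suc n < length C \<longrightarrow> head_of (C ! n) = tail_of (C ! Suc n)" for C
    using that
  proof (induction C)
    case (Cons a C)
    show ?case
    proof (cases "C = []")
      case True
      then show ?thesis using Cons.prems by (auto intro!: walk.intros)
    next
      case False
      have "head_of a = tail_of (hd C)"
        using Cons.prems(3)[rule_format, of 0] False by (simp add: hd_conv_nth)
      moreover have "\<forall>n. Suc n < length C \<longrightarrow> head_of (C ! n) = tail_of (C ! Suc n)"
        using Cons.prems(3) by (metis Suc_less_eq length_Cons nth_Cons_Suc)
      then have "walk E C (tail_of (hd C)) (head_of (last C))"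
        using Cons.prems(2) False by (intro Cons.IH) auto
      ultimately show ?thesis
        using Cons.prems(2) False by (auto intro!: walk.intros)
    qed
  qed simp
  then show ?thesis
    using assms unfolding closed_path_def by metis
qed

lemma closed_walk_in_cycle_space:
  assumes "finite E" and W: "walk E W s s"
  shows "path_vec W \<in> cycle_space V E"
proof -
  have "(\<Sum>e\<in>{e\<in>E. fst e = v}. path_vec W e) = (\<Sum>e\<in>{e\<in>E. snd e = v}. path_vec W e)" for v
  proof -
    define g :: "'a \<Rightarrow> real" where "g u = (if u = v then 1 else 0)" for u
    have "0 = path_weight (\<lambda>e. g (snd e) - g (fst e)) W"
      using walk_potential_difference[OF W] by simp
    also have "\<dots> = (\<Sum>e\<in>E. path_vec W e * g (snd e)) - (\<Sum>e\<in>E. path_vec W e * g (fst e))"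
      using path_weight_eq_sum_path_vec[OF assms(1) walk_arcs[OF W]]
      by (simp add: right_diff_distrib sum_subtractf)
    also have "\<dots> = (\<Sum>e\<in>{e\<in>E. snd e = v}. path_vec W e) - (\<Sum>e\<in>{e\<in>E. fst e = v}. path_vec W e)"
      using assms(1) by (simp add: g_def sum.inter_filter if_distrib cong: if_cong)
    finally show ?thesis by simp
  qed
  then show ?thesis
    unfolding cycle_space_def using path_vec_eq_0[OF walk_arcs[OF W]] by auto
qed

lemma path_weight_closed_walk_eq_0:
  assumes "finite E" and span: "spans_cycle_space V E \<Gamma>" and paths: "\<forall>C\<in>\<Gamma>. closed_path E C"
    and zero: "\<forall>C\<in>\<Gamma>. path_weight w C = 0" and W: "walk E W s s"
  shows "path_weight w W = 0"
proof -
  obtain \<alpha> where \<alpha>: "path_vec W = (\<lambda>e. \<Sum>C\<in>\<Gamma>. \<alpha> C * path_vec C e)"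
    using span closed_walk_in_cycle_space[OF assms(1) W] unfolding spans_cycle_space_def by blast
  have "path_weight w W = (\<Sum>e\<in>E. \<Sum>C\<in>\<Gamma>. \<alpha> C * (path_vec C e * w e))"
    using path_weight_eq_sum_path_vec[OF assms(1) walk_arcs[OF W]]
    by (simp add: \<alpha> sum_distrib_right mult.assoc)
  also have "\<dots> = (\<Sum>C\<in>\<Gamma>. \<alpha> C * path_weight w C)"
    using paths path_weight_eq_sum_path_vec[OF assms(1)]
    by (subst sum.swap) (simp add: sum_distrib_left closed_path_def)
  finally show ?thesis
    using zero by simp
qed

lemma potential_exists:
  assumes conn: "connected_graph V E" and "E \<subseteq> V \<times> V"
    and closed: "\<And>W s. walk E W s s \<Longrightarrow> path_weight w W = 0"
  shows "\<exists>\<phi>. \<forall>e\<in>E. w e = \<phi> (snd e) - \<phi> (fst e)"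
proof (cases "E = {}")
  case False
  then obtain r where "r \<in> V"
    using assms(2) by fastforce
  have walk_from_r: "\<exists>W. walk E W r u" if "u \<in> V" for u
    using conn \<open>r \<in> V\<close> that unfolding connected_graph_def by (blast intro: rtrancl_imp_walk)
  \<comment> \<open>Well defined, because two walks from r to u differ by a closed walk.\<close>
  define \<phi> where "\<phi> u = path_weight w (SOME W. walk E W r u)" for u
  have \<phi>: "\<phi> u = path_weight w W" if W: "walk E W r u" for W u
  proof -
    have "walk E (SOME W. walk E W r u) r u"
      using W by (rule someI)
    from walk_append[OF this walk_reverse_path[OF W]] show ?thesis
      using closed unfolding \<phi>_def by (fastforce simp: path_weight_append path_weight_reverse_path)
  qed
  show ?thesis
  proof (intro exI ballI)
    fix e assume "e \<in> E"
    then have "fst e \<in> V"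
      using assms(2) by auto
    then obtain W where W: "walk E W r (fst e)"
      using walk_from_r by blast
    with \<open>e \<in> E\<close> have "walk E (W @ [(e, True)]) r (snd e)"
      by (auto intro!: walk_append walk.intros simp: head_of_def tail_of_def)
    then show "w e = \<phi> (snd e) - \<phi> (fst e)"
      using \<phi>[OF W] \<phi> by (simp add: path_weight_append path_weight_def)
  qed
qed simp

lemma Aset_potential:
  assumes "finite E" and "E \<subseteq> V \<times> V" and "connected_graph V E"
    and paths: "\<forall>C\<in>\<Gamma>. closed_path E C" and "spans_cycle_space V E \<Gamma>" and "d \<in> Aset dp \<Gamma>"
  shows "\<exists>\<phi>. \<forall>e\<in>E. d e True - d e False = real_of_int (dp e) + \<phi> (snd e) - \<phi> (fst e)"
proof -
  let ?w = "\<lambda>e. d e True - d e False - real_of_int (dp e)"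
  have "\<forall>C\<in>\<Gamma>. path_weight ?w C = 0"
    using \<open>d \<in> Aset dp \<Gamma>\<close> by (simp add: Aset_def flip: path_flow_sum_minus_offset)
  then have "path_weight ?w W = 0" if "walk E W s s" for W s
    using path_weight_closed_walk_eq_0[OF assms(1,5,4) _ that] by blast
  then obtain \<phi> where "\<forall>e\<in>E. ?w e = \<phi> (snd e) - \<phi> (fst e)"
    using potential_exists[OF assms(3,2)] by blast
  then have "\<forall>e\<in>E. d e True - d e False = real_of_int (dp e) + \<phi> (snd e) - \<phi> (fst e)"
    by (auto simp: algebra_simps)
  then show ?thesis by blast
qed

lemma potential_flow_in_Aset:
  assumes paths: "\<forall>C\<in>\<Gamma>. closed_path E C"
    and x: "\<forall>e\<in>E. x e True - x e False = real_of_int (dp e) + g (snd e) - g (fst e)"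
  shows "x \<in> Aset dp \<Gamma>"
  unfolding Aset_def
proof (intro CollectI ballI)
  fix C assume "C \<in> \<Gamma>"
  then have "closed_path E C"
    using paths by blast
  then have "path_weight (\<lambda>e. x e True - x e False - real_of_int (dp e)) C
      = path_weight (\<lambda>e. g (snd e) - g (fst e)) C"
    using x by (intro path_weight_cong) (auto simp: closed_path_def)
  also have "\<dots> = 0"
    using walk_potential_difference[OF closed_path_walk[OF \<open>closed_path E C\<close>]] by simp
  finally show "path_flow_sum x C = path_offset_sum dp C"
    by (simp flip: path_flow_sum_minus_offset)
qed

section \<open>Rounding fractional flows\<close>

lemma floor_shift_has_integral: "((\<lambda>t. real_of_int \<lfloor>a + t\<rfloor>) has_integral a) {0..1}"
proof -
  define s where "s = 1 - frac a"
  have s: "0 < s" "s \<le> 1"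
    using frac_lt_1[of a] frac_ge_0[of a] by (auto simp: s_def)
  have "((\<lambda>t. real_of_int \<lfloor>a + t\<rfloor>) has_integral s * \<lfloor>a\<rfloor>) {0..s}"
  proof (rule has_integral_spike_finite[of "{s}"])
    show "real_of_int \<lfloor>a + t\<rfloor> = real_of_int \<lfloor>a\<rfloor>" if "t \<in> {0..s} - {s}" for t
      using that by (simp add: floor_eq_iff s_def frac_def) linarith
  qed (use has_integral_const_real[of "real_of_int \<lfloor>a\<rfloor>" 0 s] s in simp_all)
  moreover have "((\<lambda>t. real_of_int \<lfloor>a + t\<rfloor>) has_integral (1 - s) * (\<lfloor>a\<rfloor> + 1)) {s..1}"
  proof (rule has_integral_spike_finite[of "{}"])
    show "real_of_int \<lfloor>a + t\<rfloor> = real_of_int \<lfloor>a\<rfloor> + 1" if "t \<in> {s..1} - {}" for t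
    proof -
      have "\<lfloor>a + t\<rfloor> = \<lfloor>a\<rfloor> + 1"
        using that by (simp add: floor_eq_iff s_def frac_def) linarith
      then show ?thesis by simp
    qed
  qed (use has_integral_const_real[of "real_of_int \<lfloor>a\<rfloor> + 1" s 1] s in simp_all)
  ultimately have "((\<lambda>t. real_of_int \<lfloor>a + t\<rfloor>) has_integral s * \<lfloor>a\<rfloor> + (1 - s) * (\<lfloor>a\<rfloor> + 1)) {0..1}"
    using s by (intro has_integral_combine) auto
  then show ?thesis
    by (simp add: s_def frac_def algebra_simps)
qed

lemma ereal_le_has_integral:
  fixes u :: ereal and F :: "real \<Rightarrow> real"
  assumes F: "(F has_integral I) {0..1}" and le: "\<And>t. t \<in> {0..1} \<Longrightarrow> u \<le> ereal (F t)"
  shows "u \<le> ereal I"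
proof (cases u)
  case (real r)
  have "((\<lambda>t. r) has_integral r) {0..1::real}"
    using has_integral_const_real[of r 0 1] by simp
  then have "r \<le> I"
    by (rule has_integral_le[OF _ F]) (use le[unfolded real] in simp)
  then show ?thesis
    using real by simp
next
  case PInf
  then show ?thesis
    using le[of 0] by simp
qed simp

text \<open>The convex piecewise linear function through (-1, b), (0, min 0 (a + b)) and (1, a):
  at x \<in> {-1, 0, 1} it is the least cost a p + b q of a binary pair (p, q) with p - q = x.\<close>

definition edge_envelope :: "real \<Rightarrow> real \<Rightarrow> real \<Rightarrow> real" where
  "edge_envelope a b x = min 0 (a + b)
     + (if 0 \<le> x then (a - min 0 (a + b)) * x else (b - min 0 (a + b)) * (- x))"

lemma edge_envelope_le:
  assumes "0 \<le> p" "p \<le> 1" "0 \<le> q" "q \<le> 1"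
  shows "edge_envelope a b (p - q) \<le> a * p + b * q"
proof -
  define m where "m = min 0 (a + b)"
  have "0 \<le> (a + b - m) * p" "0 \<le> (a + b - m) * q" "0 \<le> - m * (1 - p)" "0 \<le> - m * (1 - q)"
    using assms by (simp_all add: m_def mult_nonpos_nonneg)
  moreover have "a * p + b * q = m + (a - m) * (p - q) + (a + b - m) * q + - m * (1 - p)"
    "a * p + b * q = m + (b - m) * (q - p) + (a + b - m) * p + - m * (1 - q)"
    by (simp_all add: algebra_simps)
  ultimately show ?thesis
    by (simp add: edge_envelope_def m_def[symmetric])
qed

lemma edge_envelope_has_integral:
  fixes k :: "real \<Rightarrow> real"
  assumes k: "(k has_integral z) {0..1}"
    and side: "\<And>t. t \<in> {0..1} \<Longrightarrow> (0 \<le> z \<longrightarrow> 0 \<le> k t) \<and> (z < 0 \<longrightarrow> k t \<le> 0)"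
  shows "((\<lambda>t. edge_envelope a b (k t)) has_integral edge_envelope a b z) {0..1}"
proof -
  define m where "m = min 0 (a + b)"
  define \<sigma> where "\<sigma> = (if 0 \<le> z then a - m else m - b)"
  \<comment> \<open>On the side of 0 where z lies the envelope is affine, so it commutes with averaging.\<close>
  have affine: "edge_envelope a b (k t) = m + \<sigma> * k t" if "t \<in> {0..1}" for t
    using side[OF that] by (auto simp: edge_envelope_def m_def \<sigma>_def algebra_simps)
  have "((\<lambda>t. m + \<sigma> * k t) has_integral m + \<sigma> * z) {0..1}"
    using has_integral_add[OF has_integral_const_real[of m 0 1] has_integral_mult_right[OF k, of \<sigma>]]
    by simp
  moreover have "edge_envelope a b z = m + \<sigma> * z"
    by (simp add: edge_envelope_def m_def \<sigma>_def algebra_simps)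
  ultimately show ?thesis
    using has_integral_cong[of "{0..1}" "\<lambda>t. edge_envelope a b (k t)"] affine by simp
qed

lemma PU_le_rounding:
  fixes g :: "'v \<Rightarrow> int" and k :: "'v \<times> 'v \<Rightarrow> int"
  assumes paths: "\<forall>C\<in>\<Gamma>. closed_path E C"
    and k: "\<And>e. e \<in> E \<Longrightarrow> k e \<in> {-1, 0, 1} \<and> k e = dp e + g (snd e) - g (fst e)"
  shows "PU E \<Gamma> dp c \<le> ereal (\<Sum>e\<in>E. edge_envelope (c e True) (c e False) (k e))"
proof -
  \<comment> \<open>The cheapest binary pair with difference k e.\<close>
  define x :: "'v flow" where
    "x e s = (if (if s then k e = 1 else k e = -1) \<or> (k e = 0 \<and> c e True + c e False < 0)
      then 1 else 0)"
    for e s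
  have "x \<in> Aset dp \<Gamma>"
  proof (rule potential_flow_in_Aset[OF paths])
    show "\<forall>e\<in>E. x e True - x e False
        = real_of_int (dp e) + real_of_int (g (snd e)) - real_of_int (g (fst e))"
      using k by (force simp: x_def)
  qed
  moreover have "\<forall>e\<in>E. \<forall>s. x e s \<in> {0, 1}"
    by (simp add: x_def)
  ultimately have "PU E \<Gamma> dp c \<le> ereal (cost E c x)"
    unfolding PU_def by (intro INF_lower) simp
  also have "cost E c x = (\<Sum>e\<in>E. edge_envelope (c e True) (c e False) (k e))"
    unfolding cost_def
  proof (rule sum.cong[OF refl])
    fix e assume "e \<in> E"
    then consider "k e = -1" | "k e = 0" | "k e = 1"
      using k by blast
    then show "c e True * x e True + c e False * x e False
        = edge_envelope (c e True) (c e False) (k e)"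
      by cases (auto simp: x_def edge_envelope_def)
  qed
  finally show ?thesis .
qed

lemma floor_difference_rounding:
  fixes n :: int
  assumes "z = real_of_int n + a - b" and "\<bar>z\<bar> \<le> 1"
  shows "n + \<lfloor>a\<rfloor> - \<lfloor>b\<rfloor> \<in> {-1, 0, 1}
    \<and> (0 \<le> z \<longrightarrow> 0 \<le> n + \<lfloor>a\<rfloor> - \<lfloor>b\<rfloor>) \<and> (z < 0 \<longrightarrow> n + \<lfloor>a\<rfloor> - \<lfloor>b\<rfloor> \<le> 0)"
proof -
  have "\<bar>real_of_int (n + \<lfloor>a\<rfloor> - \<lfloor>b\<rfloor>) - z\<bar> < 1"
    using assms(1) floor_correct[of a] floor_correct[of b] unfolding abs_less_iff by simp linarith
  then show ?thesis
    using assms(2) by auto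
qed

lemma PU_le_cost:
  assumes "finite E" and "E \<subseteq> V \<times> V" and "connected_graph V E"
    and paths: "\<forall>C\<in>\<Gamma>. closed_path E C" and "spans_cycle_space V E \<Gamma>"
    and "d \<in> Aset dp \<Gamma>" and box: "\<forall>e\<in>E. \<forall>b. d e b \<in> {0..1}"
  shows "PU E \<Gamma> dp c \<le> ereal (cost E c d)"
proof -
  obtain \<phi> where \<phi>: "\<forall>e\<in>E. d e True - d e False = real_of_int (dp e) + \<phi> (snd e) - \<phi> (fst e)"
    using Aset_potential[OF assms(1-6)] by blast
  define z where "z e = d e True - d e False" for e
  define k where "k t e = dp e + \<lfloor>\<phi> (snd e) + t\<rfloor> - \<lfloor>\<phi> (fst e) + t\<rfloor>" for t e
  define F where "F t = (\<Sum>e\<in>E. edge_envelope (c e True) (c e False) (k t e))" for t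
  have k_side: "k t e \<in> {-1, 0, 1} \<and> (0 \<le> z e \<longrightarrow> 0 \<le> k t e) \<and> (z e < 0 \<longrightarrow> k t e \<le> 0)"
    if "e \<in> E" for t e
  proof -
    have "d e True \<in> {0..1}" "d e False \<in> {0..1}"
      using box that by auto
    then show ?thesis
      using \<phi> that floor_difference_rounding[of "z e" "dp e" "\<phi> (snd e) + t" "\<phi> (fst e) + t"]
      by (auto simp: k_def z_def)
  qed
  have PU_le_F: "PU E \<Gamma> dp c \<le> ereal (F t)" for t
    unfolding F_def using k_side by (intro PU_le_rounding[OF paths]) (simp add: k_def)
  have F_integral: "(F has_integral (\<Sum>e\<in>E. edge_envelope (c e True) (c e False) (z e))) {0..1}"
    unfolding F_def
  proof (intro has_integral_sum[OF \<open>finite E\<close>] edge_envelope_has_integral)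
    fix e assume "e \<in> E"
    show "((\<lambda>t. real_of_int (k t e)) has_integral z e) {0..1}"
      using has_integral_diff[OF has_integral_add[OF has_integral_const_real floor_shift_has_integral]
          floor_shift_has_integral] \<phi> \<open>e \<in> E\<close>
      by (simp add: k_def z_def)
    show "(0 \<le> z e \<longrightarrow> 0 \<le> real_of_int (k t e)) \<and> (z e < 0 \<longrightarrow> real_of_int (k t e) \<le> 0)" for t
      using k_side[OF \<open>e \<in> E\<close>] by simp
  qed
  have "PU E \<Gamma> dp c \<le> ereal (\<Sum>e\<in>E. edge_envelope (c e True) (c e False) (z e))"
    using F_integral PU_le_F by (rule ereal_le_has_integral)
  also have "(\<Sum>e\<in>E. edge_envelope (c e True) (c e False) (z e)) \<le> cost E c d"
    unfolding cost_def z_def using box by (intro sum_mono edge_envelope_le) auto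
  finally show ?thesis
    by simp
qed

lemma LP_le_PU: "LP E \<Gamma> dp c \<le> PU E \<Gamma> dp c"
  unfolding LP_def PU_def
proof (rule INF_superset_mono)
  have "{0, 1} \<subseteq> {0..1::real}"
    by simp
  then show "{d. d \<in> Aset dp \<Gamma> \<and> (\<forall>e\<in>E. \<forall>b. d e b \<in> {0, 1})}
      \<subseteq> {d. d \<in> Aset dp \<Gamma> \<and> (\<forall>e\<in>E. \<forall>b. d e b \<in> {0..1})}"
    by blast
qed simp

lemma PU_eq_LP:
  assumes "finite E" and "E \<subseteq> V \<times> V" and "connected_graph V E"
    and "\<forall>C\<in>\<Gamma>. closed_path E C" and "spans_cycle_space V E \<Gamma>"
  shows "PU E \<Gamma> dp c = LP E \<Gamma> dp c"
proof (rule antisym)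
  show "PU E \<Gamma> dp c \<le> LP E \<Gamma> dp c"
    unfolding LP_def by (rule INF_greatest) (use PU_le_cost[OF assms] in blast)
qed (rule LP_le_PU)

section \<open>The Lagrangian relaxation\<close>

lemma sum_Sigma_times_UNIV:
  fixes F :: "'k \<Rightarrow> 'e \<Rightarrow> 'b::finite \<Rightarrow> 'a::comm_monoid_add"
  assumes "finite K" and "\<And>k. k \<in> K \<Longrightarrow> finite (Ek k)"
  shows "(\<Sum>(k, e, b)\<in>Sigma K (\<lambda>k. Ek k \<times> UNIV). F k e b) = (\<Sum>k\<in>K. \<Sum>e\<in>Ek k. \<Sum>b\<in>UNIV. F k e b)"
proof -
  have "(\<Sum>k\<in>K. \<Sum>e\<in>Ek k. \<Sum>b\<in>UNIV. F k e b) = (\<Sum>k\<in>K. \<Sum>(e, b)\<in>Ek k \<times> UNIV. F k e b)"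
    by (simp add: sum.cartesian_product)
  also have "\<dots> = (\<Sum>(k, e, b)\<in>Sigma K (\<lambda>k. Ek k \<times> UNIV). F k e b)"
    using assms by (subst sum.Sigma) auto
  finally show ?thesis ..
qed

lemma cost_split:
  fixes K :: nat
  assumes "finite E" and cover: "(\<Union>k\<in>{1..K}. Ek k) = E"
    and split: "\<forall>e\<in>E. \<forall>b. (\<Sum>k\<in>{k\<in>{1..K}. e \<in> Ek k}. ck k e b) = c e b"
  shows "(\<Sum>k\<in>{1..K}. \<Sum>e\<in>Ek k. \<Sum>b\<in>UNIV. ck k e b * d e b) = cost E c d"
proof -
  have "(\<Sum>k\<in>{1..K}. \<Sum>e\<in>Ek k. \<Sum>b\<in>UNIV. ck k e b * d e b)
      = (\<Sum>k\<in>{1..K}. \<Sum>e\<in>{e\<in>E. e \<in> Ek k}. \<Sum>b\<in>UNIV. ck k e b * d e b)"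
    using cover by (intro sum.cong) auto
  also have "\<dots> = (\<Sum>e\<in>E. \<Sum>k\<in>{k\<in>{1..K}. e \<in> Ek k}. \<Sum>b\<in>UNIV. ck k e b * d e b)"
    using \<open>finite E\<close> by (intro sum.swap_restrict) auto
  also have "\<dots> = (\<Sum>e\<in>E. \<Sum>b\<in>UNIV. c e b * d e b)"
  proof (rule sum.cong[OF refl])
    fix e assume "e \<in> E"
    have "(\<Sum>k\<in>{k\<in>{1..K}. e \<in> Ek k}. \<Sum>b\<in>UNIV. ck k e b * d e b)
        = (\<Sum>b\<in>UNIV. (\<Sum>k\<in>{k\<in>{1..K}. e \<in> Ek k}. ck k e b) * d e b)"
      by (subst sum.swap) (simp add: sum_distrib_right)
    then show "(\<Sum>k\<in>{k\<in>{1..K}. e \<in> Ek k}. \<Sum>b\<in>UNIV. ck k e b * d e b) = (\<Sum>b\<in>UNIV. c e b * d e b)"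
      using split \<open>e \<in> E\<close> by simp
  qed
  also have "\<dots> = cost E c d"
    by (simp add: cost_def UNIV_bool add.commute)
  finally show ?thesis .
qed

definition relaxation_feasible ::
  "('v \<times> 'v) set \<Rightarrow> ('v \<times> 'v \<Rightarrow> int) \<Rightarrow> nat \<Rightarrow> (nat \<Rightarrow> ('v \<times> 'v) set) \<Rightarrow> (nat \<Rightarrow> 'v path set)
     \<Rightarrow> ((nat \<Rightarrow> 'v flow) \<times> 'v flow) set" where
  "relaxation_feasible E dp K Ek Gk =
     {(ds, d). (\<forall>k\<in>{1..K}. ds k \<in> Aset dp (Gk k) \<and> (\<forall>e\<in>Ek k. \<forall>b. ds k e b \<in> {0..1}))
       \<and> (\<forall>e\<in>E. \<forall>b. d e b \<in> {0..1})}"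

lemma LR_eq_SUP_INF:
  "LR E dp K Ek Gk ck
     = (SUP lam. INF p\<in>relaxation_feasible E dp K Ek Gk.
          ereal (lagrangian K Ek ck lam (fst p) (snd p)))"
  unfolding LR_def relaxation_feasible_def ..

lemma LR_le_LP:
  assumes "finite E" and cover: "(\<Union>k\<in>{1..K}. Ek k) = E" and sub: "\<forall>k\<in>{1..K}. Gk k \<subseteq> \<Gamma>"
    and split: "\<forall>e\<in>E. \<forall>b. (\<Sum>k\<in>{k\<in>{1..K}. e \<in> Ek k}. ck k e b) = c e b"
  shows "LR E dp K Ek Gk ck \<le> LP E \<Gamma> dp c"
  unfolding LR_eq_SUP_INF LP_def
proof (intro SUP_least INF_greatest)
  fix lam :: "nat \<Rightarrow> 'a flow" and d
  assume d: "d \<in> {d. d \<in> Aset dp \<Gamma> \<and> (\<forall>e\<in>E. \<forall>b. d e b \<in> {0..1})}"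
  have "((\<lambda>k. d), d) \<in> relaxation_feasible E dp K Ek Gk"
    using d sub cover by (auto simp: relaxation_feasible_def Aset_def)
  moreover have "lagrangian K Ek ck lam (\<lambda>k. d) d = cost E c d"
    using cost_split[OF assms(1) cover split] by (simp add: lagrangian_def)
  ultimately show "(INF p\<in>relaxation_feasible E dp K Ek Gk.
      ereal (lagrangian K Ek ck lam (fst p) (snd p))) \<le> ereal (cost E c d)"
    by (intro INF_lower2[of "((\<lambda>k. d), d)"]) auto
qed

instantiation "fun" :: (type, real_vector) real_vector
begin

definition scaleR_fun :: "real \<Rightarrow> ('a \<Rightarrow> 'b) \<Rightarrow> 'a \<Rightarrow> 'b" where
  "scaleR_fun r f = (\<lambda>x. r *\<^sub>R f x)"

instance
  by standard (simp_all add: scaleR_fun_def fun_eq_iff algebra_simps)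

end

lemma scaleR_fun_apply [simp]: "(r *\<^sub>R f) x = r *\<^sub>R f x"
  by (simp add: scaleR_fun_def)

lemma linear_path_flow_sum:
  fixes C :: "'v path"
  shows "linear (\<lambda>d. path_flow_sum d C)"
proof (rule linearI)
  show "path_flow_sum (d1 + d2) C = path_flow_sum d1 C + path_flow_sum d2 C" for d1 d2 :: "'v flow"
    by (induction C) (simp_all add: path_flow_sum_def)
  show "path_flow_sum (r *\<^sub>R d) C = r *\<^sub>R path_flow_sum d C" for r and d :: "'v flow"
    by (induction C) (simp_all add: path_flow_sum_def algebra_simps)
qed

lemma path_flow_sum_cong:
  "(\<And>a b. a \<in> set C \<Longrightarrow> d1 (fst a) b = d2 (fst a) b) \<Longrightarrow> path_flow_sum d1 C = path_flow_sum d2 C"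
  unfolding path_flow_sum_def by (intro arg_cong[where f = sum_list] map_cong) auto

text \<open>A pair (a, \<beta>) stands for the linear constraint \<beta> \<le> a x.\<close>

definition range_constraints :: "('a \<Rightarrow> real) \<Rightarrow> real \<Rightarrow> real \<Rightarrow> (('a \<Rightarrow> real) \<times> real) set" where
  "range_constraints a lo hi = {(a, lo), (\<lambda>x. - a x, - hi)}"

lemma finite_range_constraints [simp]: "finite (range_constraints a lo hi)"
  by (simp add: range_constraints_def)

lemma range_constraints_iff:
  "(\<forall>i\<in>range_constraints a lo hi. snd i \<le> fst i x) \<longleftrightarrow> lo \<le> a x \<and> a x \<le> hi"
  by (auto simp: range_constraints_def)

lemma range_constraints_homogeneous_iff:
  "(\<forall>i\<in>range_constraints a lo hi. 0 \<le> fst i x) \<longleftrightarrow> a x = 0"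
  by (auto simp: range_constraints_def)

lemma linear_range_constraints_iff:
  "(\<forall>i\<in>range_constraints a lo hi. linear (fst i)) \<longleftrightarrow> linear a"
  by (auto simp: range_constraints_def linear_compose_neg)

definition local_vars :: "nat \<Rightarrow> (nat \<Rightarrow> ('v \<times> 'v) set) \<Rightarrow> (nat \<times> ('v \<times> 'v) \<times> bool) set" where
  "local_vars K Ek = Sigma {1..K} (\<lambda>k. Ek k \<times> UNIV)"

definition local_cost ::
  "nat \<Rightarrow> (nat \<Rightarrow> ('v \<times> 'v) set) \<Rightarrow> (nat \<Rightarrow> 'v flow) \<Rightarrow> (nat \<Rightarrow> 'v flow) \<times> 'v flow \<Rightarrow> real" where
  "local_cost K Ek ck p = (\<Sum>(k, e, b)\<in>local_vars K Ek. ck k e b * fst p k e b)"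

definition consistency_gap :: "nat \<times> ('v \<times> 'v) \<times> bool \<Rightarrow> (nat \<Rightarrow> 'v flow) \<times> 'v flow \<Rightarrow> real" where
  "consistency_gap l p = (case l of (k, e, b) \<Rightarrow> fst p k e b - snd p e b)"

definition relaxation_constraints ::
  "('v \<times> 'v) set \<Rightarrow> ('v \<times> 'v \<Rightarrow> int) \<Rightarrow> nat \<Rightarrow> (nat \<Rightarrow> ('v \<times> 'v) set) \<Rightarrow> (nat \<Rightarrow> 'v path set)
     \<Rightarrow> (((nat \<Rightarrow> 'v flow) \<times> 'v flow \<Rightarrow> real) \<times> real) set" where
  "relaxation_constraints E dp K Ek Gk =
     (\<Union>(k, e, b)\<in>local_vars K Ek. range_constraints (\<lambda>p. fst p k e b) 0 1)
     \<union> (\<Union>(e, b)\<in>E \<times> UNIV. range_constraints (\<lambda>p. snd p e b) 0 1)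
     \<union> (\<Union>(k, C)\<in>Sigma {1..K} Gk.
          range_constraints (\<lambda>p. path_flow_sum (fst p k) C)
            (path_offset_sum dp C) (path_offset_sum dp C))"

lemma finite_local_vars: "(\<And>k. k \<in> {1..K} \<Longrightarrow> finite (Ek k)) \<Longrightarrow> finite (local_vars K Ek)"
  by (auto simp: local_vars_def intro!: finite_SigmaI)

lemma finite_relaxation_constraints:
  assumes "finite E" and "\<And>k. k \<in> {1..K} \<Longrightarrow> finite (Ek k) \<and> finite (Gk k)"
  shows "finite (relaxation_constraints E dp K Ek Gk)"
  using assms finite_local_vars[of K Ek]
  by (auto simp: relaxation_constraints_def intro!: finite_UN_I finite_SigmaI split: prod.splits)

lemma linear_relaxation_constraints:
  "\<forall>i\<in>relaxation_constraints E dp K Ek Gk. linear (fst i)"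
proof -
  have linear_fst_k: "linear (\<lambda>p :: (nat \<Rightarrow> 'v flow) \<times> 'v flow. fst p k)" for k
    by (intro linearI) simp_all
  have linear_path_flow_sum_k: "linear (\<lambda>p :: (nat \<Rightarrow> 'v flow) \<times> 'v flow. path_flow_sum (fst p k) C)"
    for k C
    using linear_compose[OF linear_fst_k linear_path_flow_sum] by (simp add: comp_def)
  show ?thesis
    by (simp add: relaxation_constraints_def ball_Un ball_UN case_prod_unfold
        linear_range_constraints_iff linear_fst_k linear_path_flow_sum_k linearI)
qed

lemma relaxation_constraints_iff:
  "(\<forall>i\<in>relaxation_constraints E dp K Ek Gk. snd i \<le> fst i p) \<longleftrightarrow> p \<in> relaxation_feasible E dp K Ek Gk"
  by (simp add: relaxation_constraints_def relaxation_feasible_def local_vars_def Aset_def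
      ball_Un ball_UN case_prod_unfold range_constraints_iff)
    (auto simp: Ball_def intro: order.antisym)

lemma local_cost_recession:
  assumes "\<forall>i\<in>relaxation_constraints E dp K Ek Gk. 0 \<le> fst i p"
  shows "local_cost K Ek ck p = 0"
proof -
  have "\<forall>l\<in>local_vars K Ek. fst p (fst l) (fst (snd l)) (snd (snd l)) = 0"
    using assms by (simp add: relaxation_constraints_def ball_Un ball_UN case_prod_unfold
        range_constraints_homogeneous_iff)
  then show ?thesis
    by (simp add: local_cost_def case_prod_beta')
qed

lemma linear_local_cost: "linear (local_cost K Ek ck)"
  unfolding local_cost_def
  by (intro linearI) (simp_all add: case_prod_beta' sum.distrib sum_distrib_left algebra_simps)

lemma linear_consistency_gap: "linear (consistency_gap l)"
  by (intro linearI) (simp_all add: consistency_gap_def right_diff_distrib split: prod.splits)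

lemma lagrangian_eq_local_cost:
  assumes "\<And>k. k \<in> {1..K} \<Longrightarrow> finite (Ek k)"
  shows "lagrangian K Ek ck (\<lambda>k e b. \<mu> (k, e, b)) (fst p) (snd p)
    = local_cost K Ek ck p + (\<Sum>l\<in>local_vars K Ek. \<mu> l * consistency_gap l p)"
proof -
  have "lagrangian K Ek ck (\<lambda>k e b. \<mu> (k, e, b)) (fst p) (snd p)
      = (\<Sum>(k, e, b)\<in>local_vars K Ek. ck k e b * fst p k e b + \<mu> (k, e, b) * (fst p k e b - snd p e b))"
    unfolding lagrangian_def local_vars_def using assms by (subst sum_Sigma_times_UNIV) auto
  then show ?thesis
    by (simp add: local_cost_def consistency_gap_def sum.distrib case_prod_unfold)
qed

lemma LP_le_local_cost:
  fixes K :: nat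
  assumes "finite E" and cover: "(\<Union>k\<in>{1..K}. Ek k) = E"
    and subpaths: "\<forall>k\<in>{1..K}. \<forall>C\<in>Gk k. closed_path (Ek k) C"
    and split: "\<forall>e\<in>E. \<forall>b. (\<Sum>k\<in>{k\<in>{1..K}. e \<in> Ek k}. ck k e b) = c e b"
    and consistent: "(\<Inter>k\<in>{1..K}. Aset dp (Gk k)) \<subseteq> Aset dp \<Gamma>"
    and feasible: "p \<in> relaxation_feasible E dp K Ek Gk"
    and agree: "\<forall>l\<in>local_vars K Ek. consistency_gap l p = 0"
  shows "LP E \<Gamma> dp c \<le> ereal (local_cost K Ek ck p)"
proof -
  obtain ds d where p: "p = (ds, d)"
    by force
  have agree': "ds k e b = d e b" if "k \<in> {1..K}" "e \<in> Ek k" for k e b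
    using agree that by (auto simp: p local_vars_def consistency_gap_def)
  have box: "\<forall>e\<in>E. \<forall>b. d e b \<in> {0..1}" and ds: "\<And>k. k \<in> {1..K} \<Longrightarrow> ds k \<in> Aset dp (Gk k)"
    using feasible by (auto simp: p relaxation_feasible_def)
  have "d \<in> Aset dp (Gk k)" if "k \<in> {1..K}" for k
    unfolding Aset_def
  proof (intro CollectI ballI)
    fix C assume "C \<in> Gk k"
    then have "path_flow_sum d C = path_flow_sum (ds k) C"
      using subpaths agree' that by (intro path_flow_sum_cong) (auto simp: closed_path_def)
    then show "path_flow_sum d C = path_offset_sum dp C"
      using ds[OF that] \<open>C \<in> Gk k\<close> by (simp add: Aset_def)
  qed
  then have "d \<in> Aset dp \<Gamma>"
    using consistent by blast
  then have "LP E \<Gamma> dp c \<le> ereal (cost E c d)"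
    unfolding LP_def using box by (intro INF_lower) simp
  also have "cost E c d = (\<Sum>k\<in>{1..K}. \<Sum>e\<in>Ek k. \<Sum>b\<in>UNIV. ck k e b * d e b)"
    by (rule cost_split[OF assms(1) cover split, symmetric])
  also have "\<dots> = local_cost K Ek ck p"
    unfolding local_cost_def local_vars_def p using cover \<open>finite E\<close> agree'
    by (subst sum_Sigma_times_UNIV) (auto intro!: sum.cong intro: finite_subset)
  finally show ?thesis .
qed

lemma lagrangian_dual_le_LR:
  assumes "\<And>k. k \<in> {1..K} \<Longrightarrow> finite (Ek k)"
  shows "(SUP \<mu>. INF p\<in>relaxation_feasible E dp K Ek Gk.
      ereal (local_cost K Ek ck p + (\<Sum>l\<in>local_vars K Ek. \<mu> l * consistency_gap l p)))
    \<le> LR E dp K Ek Gk ck"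
  unfolding LR_eq_SUP_INF
proof (rule SUP_mono)
  fix \<mu> :: "nat \<times> ('a \<times> 'a) \<times> bool \<Rightarrow> real"
  have "lagrangian K Ek ck (\<lambda>k e b. \<mu> (k, e, b)) (fst p) (snd p)
      = local_cost K Ek ck p + (\<Sum>l\<in>local_vars K Ek. \<mu> l * consistency_gap l p)" for p
    by (rule lagrangian_eq_local_cost[OF assms])
  then show "\<exists>lam\<in>UNIV. (INF p\<in>relaxation_feasible E dp K Ek Gk.
      ereal (local_cost K Ek ck p + (\<Sum>l\<in>local_vars K Ek. \<mu> l * consistency_gap l p)))
    \<le> (INF p\<in>relaxation_feasible E dp K Ek Gk. ereal (lagrangian K Ek ck lam (fst p) (snd p)))"
    by (intro bexI[of _ "\<lambda>k e b. \<mu> (k, e, b)"]) simp_all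
qed

lemma LP_le_LR:
  fixes K :: nat
  assumes "finite E" and cover: "(\<Union>k\<in>{1..K}. Ek k) = E"
    and fin_Gk: "\<And>k. k \<in> {1..K} \<Longrightarrow> finite (Gk k)"
    and subpaths: "\<forall>k\<in>{1..K}. \<forall>C\<in>Gk k. closed_path (Ek k) C"
    and split: "\<forall>e\<in>E. \<forall>b. (\<Sum>k\<in>{k\<in>{1..K}. e \<in> Ek k}. ck k e b) = c e b"
    and consistent: "(\<Inter>k\<in>{1..K}. Aset dp (Gk k)) \<subseteq> Aset dp \<Gamma>"
  shows "LP E \<Gamma> dp c \<le> LR E dp K Ek Gk ck"
proof -
  have fin_Ek: "finite (Ek k)" if "k \<in> {1..K}" for k
    using cover \<open>finite E\<close> that by (metis UN_upper finite_subset)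
  let ?P = "relaxation_constraints E dp K Ek Gk" and ?L = "local_vars K Ek"
  have "LP E \<Gamma> dp c \<le> (INF p\<in>{p. (\<forall>i\<in>?P. snd i \<le> fst i p) \<and> (\<forall>l\<in>?L. consistency_gap l p = 0)}.
      ereal (local_cost K Ek ck p))"
    using LP_le_local_cost[OF assms(1,2,4,5,6)]
    by (auto intro: INF_greatest simp: relaxation_constraints_iff)
  also have "\<dots> \<le> (SUP \<mu>. INF p\<in>{p. \<forall>i\<in>?P. snd i \<le> fst i p}.
      ereal (local_cost K Ek ck p + (\<Sum>l\<in>?L. \<mu> l * consistency_gap l p)))"
  proof (rule lp_lagrangian_duality)
    show "finite ?P"
      using fin_Ek fin_Gk by (intro finite_relaxation_constraints[OF assms(1)]) auto
    show "finite ?L"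
      using fin_Ek by (rule finite_local_vars)
    show "linear (fst i)" if "i \<in> ?P" for i
      using linear_relaxation_constraints that by blast
    show "0 \<le> local_cost K Ek ck p" if "\<forall>i\<in>?P. 0 \<le> fst i p" for p
      using local_cost_recession[OF that] by simp
  qed (simp_all add: linear_consistency_gap linear_local_cost)
  also have "\<dots> \<le> LR E dp K Ek Gk ck"
    using lagrangian_dual_le_LR[OF fin_Ek] by (simp add: relaxation_constraints_iff)
  finally show ?thesis .
qed

theorem theorem2:
  fixes V :: "'v set" and E :: "('v \<times> 'v) set"
    and \<Gamma> :: "'v path set" and dp :: "'v \<times> 'v \<Rightarrow> int" and c :: "'v flow"
    and K :: nat and Ek :: "nat \<Rightarrow> ('v \<times> 'v) set" and Gk :: "nat \<Rightarrow> 'v path set"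
    and ck :: "nat \<Rightarrow> 'v flow"
  assumes finV: "finite V"
    and EV: "E \<subseteq> V \<times> V"
    and conn: "connected_graph V E"
    and finG: "finite \<Gamma>"
    and paths: "\<forall>C\<in>\<Gamma>. closed_path E C"
    and indep: "independent_paths \<Gamma>"
    and span: "spans_cycle_space V E \<Gamma>"
    and cover: "(\<Union>k\<in>{1..K}. Ek k) = E"
    and subG: "\<forall>k\<in>{1..K}. Gk k \<subseteq> \<Gamma>"
    and subpaths: "\<forall>k\<in>{1..K}. \<forall>C\<in>Gk k. closed_path (Ek k) C"
    and split: "\<forall>e\<in>E. \<forall>b. (\<Sum>k\<in>{k\<in>{1..K}. e \<in> Ek k}. ck k e b) = c e b"
  shows "LR E dp K Ek Gk ck \<le> PU E \<Gamma> dp c \<and>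
         ((\<Inter>k\<in>{1..K}. Aset dp (Gk k)) = Aset dp \<Gamma> \<longrightarrow> LR E dp K Ek Gk ck = PU E \<Gamma> dp c)"
proof -
  have "finite E"
    using finite_subset[OF EV] finV by simp
  have LR_le_LP: "LR E dp K Ek Gk ck \<le> LP E \<Gamma> dp c"
    by (rule LR_le_LP[OF \<open>finite E\<close> cover subG split])
  have PU_eq_LP: "PU E \<Gamma> dp c = LP E \<Gamma> dp c"
    by (rule PU_eq_LP[OF \<open>finite E\<close> EV conn paths span])
  have "LP E \<Gamma> dp c \<le> LR E dp K Ek Gk ck" if "(\<Inter>k\<in>{1..K}. Aset dp (Gk k)) = Aset dp \<Gamma>"
  proof (rule LP_le_LR[OF \<open>finite E\<close> cover _ subpaths split])
    show "finite (Gk k)" if "k \<in> {1..K}" for k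
      using subG finG that by (meson finite_subset)
  qed (use that in simp)
  then show ?thesis
    using LR_le_LP PU_eq_LP by auto
qed

end
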